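(* Let $\gamma\in\mathbb Q^n$. There exists $b\in\mathbb L$ such that $\mathcal S_\Sigma(\gamma-b)\subset\mathcal C_\Sigma$, or equivalently $\mathcal S_\Sigma(\gamma)\subset(-b)+\mathcal C_\Sigma$.
   Context: $N\cong\mathbb Z^d$ lattice, $\mathcal A=\{v_1,\dots,v_n\}\subset N$ generating $N$ with a homomorphism $\mathrm h:N\to\mathbb Z$, $\mathrm h(v_j)=1$; $\mathbb L=\{l\in\mathbb Z^n:\sum l_jv_j=0\}$; $\Sigma$ the simplicial fan supported on $\mathbb R_{\ge0}\mathrm{Conv}(\mathcal A)$ from a regular triangulation with vertices in $\mathcal A$, $\Sigma(d)$ its maximal cones. For $\gamma\in\mathbb Q^n$ and $l\in\mathbb L$, $\mathrm{Supp}(l)=\{v_j:l_j+\gamma_j\notin\mathbb Z_{\ge0}\}$, and $\mathcal S_\Sigma(\gamma)$ is the set of $l\in\mathbb L$ such that all elements of $\mathrm{Supp}(l)$ generate rays of a single maximal cone of $\Sigma$. For $\sigma\in\Sigma(d)$, $\mathcal C_\sigma=\{x\in\mathbb L\otimes\mathbb R:x_j\ge0$ whenever $\mathbb R_{\ge0}v_j$ is not a ray of $\sigma\}$ and $\mathcal C_\Sigma=\sum_{\sigma\in\Sigma(d)}\mathcal C_\sigma$ (Minkowski sum). *)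

theory Defs
  imports "HOL-Analysis.Analysis"
begin

text \<open>Setting: N = Z^d is int^'d, the configuration A = {v_j} is indexed by a finite
type 'n (so n = CARD('n)), and the fan Sigma comes from the regular triangulation
induced by a height function w :: 'n => real.\<close>

definition vr :: "('n \<Rightarrow> int^'d) \<Rightarrow> 'n \<Rightarrow> real^'d" where
  "vr v j = (\<chi> i. real_of_int (v j $ i))"

definition lower_face :: "('n \<Rightarrow> int^'d) \<Rightarrow> ('n \<Rightarrow> real) \<Rightarrow> real^'d \<Rightarrow> bool" where
  "lower_face v w y \<longleftrightarrow> (\<forall>j. y \<bullet> vr v j \<le> w j)"

definition cell :: "('n \<Rightarrow> int^'d) \<Rightarrow> ('n \<Rightarrow> real) \<Rightarrow> real^'d \<Rightarrow> 'n set" where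
  "cell v w y = {j. y \<bullet> vr v j = w j}"

text \<open>The regular subdivision induced by heights w is a triangulation: every lower
face of the lifted configuration is a simplex (its points are affinely independent,
i.e. linearly independent since h(v_j) = 1).\<close>
definition regular_triangulation_heights :: "('n \<Rightarrow> int^'d) \<Rightarrow> ('n \<Rightarrow> real) \<Rightarrow> bool" where
  "regular_triangulation_heights v w \<longleftrightarrow>
     (\<forall>y::real^'d. lower_face v w y \<longrightarrow> independent (vr v ` cell v w y))"

text \<open>Maximal cones Sigma(d), identified with the index sets of their ray generators.\<close>
definition max_cones :: "('n \<Rightarrow> int^'d) \<Rightarrow> ('n \<Rightarrow> real) \<Rightarrow> 'n set set" where
  "max_cones v w = {cell v w y | y::real^'d. lower_face v w y \<and> card (cell v w y) = CARD('d)}"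

definition lattL :: "('n::finite \<Rightarrow> int^'d) \<Rightarrow> ('n \<Rightarrow> int) set" where
  "lattL v = {l. (\<Sum>j\<in>UNIV. l j *s v j) = 0}"

definition Supp :: "('n \<Rightarrow> rat) \<Rightarrow> ('n \<Rightarrow> int) \<Rightarrow> 'n set" where
  "Supp \<gamma> l = {j. \<not> (\<exists>k::nat. of_int (l j) + \<gamma> j = of_nat k)}"

definition S_Sigma :: "('n::finite \<Rightarrow> int^'d) \<Rightarrow> ('n \<Rightarrow> real) \<Rightarrow> ('n \<Rightarrow> rat) \<Rightarrow> ('n \<Rightarrow> int) set" where
  "S_Sigma v w \<gamma> = {l \<in> lattL v. \<exists>\<sigma>\<in>max_cones v w. Supp \<gamma> l \<subseteq> \<sigma>}"

text \<open>L tensor R, realised as the real kernel of j |-> v_j.\<close>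
definition LR :: "('n::finite \<Rightarrow> int^'d) \<Rightarrow> ('n \<Rightarrow> real) set" where
  "LR v = {x. (\<Sum>j\<in>UNIV. x j *\<^sub>R vr v j) = 0}"

definition C_sigma :: "('n::finite \<Rightarrow> int^'d) \<Rightarrow> 'n set \<Rightarrow> ('n \<Rightarrow> real) set" where
  "C_sigma v \<sigma> = {x \<in> LR v. \<forall>j. j \<notin> \<sigma> \<longrightarrow> x j \<ge> 0}"

definition C_Sigma :: "('n::finite \<Rightarrow> int^'d) \<Rightarrow> ('n \<Rightarrow> real) \<Rightarrow> ('n \<Rightarrow> real) set" where
  "C_Sigma v w = {x. \<exists>f. (\<forall>\<sigma>\<in>max_cones v w. f \<sigma> \<in> C_sigma v \<sigma>) \<and>
                        x = (\<lambda>j. \<Sum>\<sigma>\<in>max_cones v w. f \<sigma> j)}"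

end

theory Submission
  imports Defs
begin

text \<open>Each maximal cone \<open>\<tau>\<close> is spanned by \<open>d\<close> independent integer vectors, so by Cramer's
rule a positive integer multiple of \<open>-\<Sum>\<^sub>j\<^sub>\<notin>\<^sub>\<tau> v\<^sub>j\<close> is an integer combination of the
\<open>v\<^sub>j\<close>, \<open>j \<in> \<tau>\<close>. This yields relations in \<open>\<bbbL>\<close> that are arbitrarily large off \<open>\<tau>\<close>.
Choose \<open>z\<^sub>\<tau> \<in> \<bbbL>\<close> dominating \<open>\<gamma>\<close> off \<open>\<tau>\<close>, and \<open>b \<in> \<bbbL>\<close> dominating every \<open>z\<^sub>\<tau>\<close> off one
fixed maximal cone \<open>\<sigma>\<close>. If the support of \<open>l\<close> with respect to \<open>\<gamma> - b\<close> lies in \<open>\<tau>\<close>, then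
\<open>l = (l - b + z\<^sub>\<tau>) + (b - z\<^sub>\<tau>)\<close> with summands in \<open>C\<^sub>\<tau>\<close> and \<open>C\<^sub>\<sigma>\<close>.\<close>

lemma lattL_iff_of_int_in_LR:
  "l \<in> lattL v \<longleftrightarrow> (\<lambda>j. real_of_int (l j)) \<in> LR v"
proof -
  have "(\<Sum>j\<in>UNIV. real_of_int (l j) * real_of_int (v j $ i)) = real_of_int (\<Sum>j\<in>UNIV. l j * v j $ i)" for i
    by simp
  then show ?thesis
    unfolding lattL_def LR_def by (simp add: vec_eq_iff vr_def del: of_int_sum)
qed

lemma lattL_add: "l \<in> lattL v \<Longrightarrow> m \<in> lattL v \<Longrightarrow> (\<lambda>j. l j + m j) \<in> lattL v"
  unfolding lattL_def by (simp add: vector_sadd_rdistrib sum.distrib)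

lemma lattL_diff: "l \<in> lattL v \<Longrightarrow> m \<in> lattL v \<Longrightarrow> (\<lambda>j. l j - m j) \<in> lattL v"
  unfolding lattL_def by (simp add: vector_sub_rdistrib sum_subtractf)

lemma lattL_scale: "l \<in> lattL v \<Longrightarrow> (\<lambda>j. c * l j) \<in> lattL v"
  unfolding lattL_def by (simp add: vec_eq_iff sum_component mult.assoc flip: sum_distrib_left)

lemma LR_add: "x \<in> LR v \<Longrightarrow> y \<in> LR v \<Longrightarrow> (\<lambda>j. x j + y j) \<in> LR v"
  unfolding LR_def by (simp add: scaleR_add_left sum.distrib)

lemma zero_in_C_sigma: "(\<lambda>j. 0) \<in> C_sigma v \<sigma>"
  unfolding C_sigma_def LR_def by simp

lemma C_sigma_add: "x \<in> C_sigma v \<sigma> \<Longrightarrow> y \<in> C_sigma v \<sigma> \<Longrightarrow> (\<lambda>j. x j + y j) \<in> C_sigma v \<sigma>"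
  unfolding C_sigma_def using LR_add[of x v y] by auto

lemma of_int_in_C_sigma:
  assumes "l \<in> lattL v" and "\<And>j. j \<notin> \<sigma> \<Longrightarrow> 0 \<le> l j"
  shows "(\<lambda>j. real_of_int (l j)) \<in> C_sigma v \<sigma>"
  using assms unfolding C_sigma_def lattL_iff_of_int_in_LR by simp

lemma C_sigma_add_in_C_Sigma:
  assumes "\<tau> \<in> max_cones v w" "\<sigma> \<in> max_cones v w"
    and "x \<in> C_sigma v \<tau>" "y \<in> C_sigma v \<sigma>"
  shows "(\<lambda>j. x j + y j) \<in> C_Sigma v w"
proof -
  define f where "f \<rho> = (\<lambda>j. (if \<rho> = \<tau> then x j else 0) + (if \<rho> = \<sigma> then y j else 0))" for \<rho>
  have if_in_C_sigma: "(\<lambda>j. if P then z j else 0) \<in> C_sigma v \<rho>" if "P \<Longrightarrow> z \<in> C_sigma v \<rho>" for P z \<rho>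
    using that by (cases P) (simp_all add: zero_in_C_sigma)
  have "f \<rho> \<in> C_sigma v \<rho>" for \<rho>
    unfolding f_def using assms(3,4) by (intro C_sigma_add if_in_C_sigma) simp_all
  moreover have "(\<lambda>j. x j + y j) = (\<lambda>j. \<Sum>\<rho>\<in>max_cones v w. f \<rho> j)"
    using assms(1,2) by (simp add: f_def sum.distrib)
  ultimately show ?thesis
    unfolding C_Sigma_def by blast
qed

lemma nonneg_if_not_in_Supp:
  "j \<notin> Supp \<gamma> l \<Longrightarrow> 0 \<le> of_int (l j) + \<gamma> j"
  unfolding Supp_def by force

lemma det_Ints:
  fixes A :: "'a::comm_ring_1^'n^'n"
  assumes "\<And>i j. A$i$j \<in> \<int>"
  shows "det A \<in> \<int>"
  unfolding det_def by (intro Ints_sum Ints_mult Ints_prod) (auto simp: assms)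

lemma cramer_Ints:
  fixes A :: "'a::field^'n^'n"
  assumes "det A \<noteq> 0" and "\<And>i j. A$i$j \<in> \<int>" and "\<And>i. c$i \<in> \<int>"
  shows "\<exists>x. A *v x = c \<and> (\<forall>k. det A * x$k \<in> \<int>)"
proof -
  define x where "x = (\<chi> k. det (\<chi> i j. if j = k then c$i else A$i$j) / det A)"
  have "A *v x = c"
    using cramer[OF assms(1)] x_def by simp
  moreover have "det A * x$k \<in> \<int>" for k
    using assms by (simp add: x_def det_Ints)
  ultimately show ?thesis by blast
qed

lemma ex_int_multiple_in_span:
  fixes v :: "'n::finite \<Rightarrow> int^'d" and c :: "real^'d"
  assumes inj: "inj v" and indep: "independent (vr v ` \<sigma>)" and card: "card \<sigma> = CARD('d)"
    and c: "\<And>i. c$i \<in> \<int>"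
  shows "\<exists>D>0. \<exists>a::'n \<Rightarrow> int. (\<Sum>j\<in>\<sigma>. real_of_int (a j) *\<^sub>R vr v j) = real_of_int D *\<^sub>R c"
proof -
  obtain g :: "'d \<Rightarrow> 'n" where g: "bij_betw g UNIV \<sigma>"
    using finite_same_card_bij[of "UNIV::'d set" \<sigma>] card by auto
  define A :: "real^'d^'d" where "A = (\<chi> r k. vr v (g k) $ r)"
  have column: "column k A = vr v (g k)" for k
    by (simp add: A_def column_def vec_eq_iff)
  have "columns A = vr v ` \<sigma>"
    using bij_betw_imp_surj_on[OF g] by (auto simp: columns_def column)
  moreover have "inj_on (vr v) \<sigma>"
    using inj by (auto simp: inj_on_def inj_def vr_def vec_eq_iff)
  ultimately have "rank A = CARD('d)"
    using indep card by (simp add: column_rank_def dim_eq_card_independent card_image)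
  then have det: "det A \<noteq> 0"
    by (simp add: det_eq_0_rank)
  obtain x where x: "A *v x = c" and x_Ints: "\<And>k. det A * x$k \<in> \<int>"
    using cramer_Ints[OF det _ c] by (auto simp: A_def vr_def)
  have det_in_Ints: "det A \<in> \<int>"
    by (rule det_Ints) (simp add: A_def vr_def)
  define a where "a j = \<lfloor>det A * (det A * x $ inv_into UNIV g j)\<rfloor>" for j
  have a: "real_of_int (a (g k)) = det A * det A * x$k" for k
    using bij_betw_inv_into_left[OF g] x_Ints det_in_Ints by (simp add: a_def mult.assoc)
  have "(\<Sum>j\<in>\<sigma>. real_of_int (a j) *\<^sub>R vr v j) = (\<Sum>k\<in>UNIV. real_of_int (a (g k)) *\<^sub>R vr v (g k))"
    by (rule sum.reindex_bij_betw[OF g, symmetric])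
  also have "\<dots> = (det A * det A) *\<^sub>R (A *v x)"
    by (simp add: a matrix_mult_sum column scalar_mult_eq_scaleR scaleR_sum_right)
  finally have "(\<Sum>j\<in>\<sigma>. real_of_int (a j) *\<^sub>R vr v j) = real_of_int \<lfloor>det A * det A\<rfloor> *\<^sub>R c"
    using det_in_Ints x by simp
  moreover have "\<lfloor>det A * det A\<rfloor> > 0"
  proof -
    have "real_of_int \<lfloor>det A * det A\<rfloor> = det A * det A"
      using det_in_Ints by (simp add: Ints_mult)
    moreover have "0 < det A * det A"
      using det not_real_square_gt_zero by blast
    ultimately show ?thesis
      by (metis of_int_0_less_iff)
  qed
  ultimately show ?thesis by blast
qed

lemma ex_lattL_ge_one_outside:
  fixes v :: "'n::finite \<Rightarrow> int^'d"
  assumes "inj v" and "independent (vr v ` \<sigma>)" and "card \<sigma> = CARD('d)"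
  shows "\<exists>u\<in>lattL v. \<forall>j. j \<notin> \<sigma> \<longrightarrow> 1 \<le> u j"
proof -
  define c where "c = - (\<Sum>j\<in>-\<sigma>. vr v j)"
  have "c$i \<in> \<int>" for i
    by (auto simp: c_def vr_def sum_component intro!: Ints_sum Ints_minus)
  then obtain D a where D: "D > 0"
    and a: "(\<Sum>j\<in>\<sigma>. real_of_int (a j) *\<^sub>R vr v j) = real_of_int D *\<^sub>R c"
    using ex_int_multiple_in_span[OF assms] by blast
  define u where "u j = (if j \<in> \<sigma> then a j else D)" for j
  have "(\<Sum>j\<in>UNIV. real_of_int (u j) *\<^sub>R vr v j)
      = (\<Sum>j\<in>UNIV. if j \<in> \<sigma> then real_of_int (a j) *\<^sub>R vr v j else real_of_int D *\<^sub>R vr v j)"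
    by (intro sum.cong) (simp_all add: u_def)
  also have "\<dots> = (\<Sum>j\<in>\<sigma>. real_of_int (a j) *\<^sub>R vr v j) + real_of_int D *\<^sub>R (\<Sum>j\<in>-\<sigma>. vr v j)"
    by (simp add: sum.If_cases scaleR_sum_right Compl_eq)
  also have "\<dots> = 0"
    by (simp add: a c_def)
  finally have "u \<in> lattL v"
    by (simp add: lattL_iff_of_int_in_LR LR_def)
  moreover have "\<forall>j. j \<notin> \<sigma> \<longrightarrow> 1 \<le> u j"
    using D by (simp add: u_def)
  ultimately show ?thesis by blast
qed

lemma ex_lattL_ge_outside_max_cone:
  fixes v :: "'n::finite \<Rightarrow> int^'d" and \<beta> :: "'n \<Rightarrow> 'a::floor_ceiling"
  assumes "inj v" and "regular_triangulation_heights v w" and "\<tau> \<in> max_cones v w"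
  shows "\<exists>z\<in>lattL v. \<forall>j. j \<notin> \<tau> \<longrightarrow> \<beta> j \<le> of_int (z j)"
proof -
  from assms(3) obtain y where "\<tau> = cell v w y" "lower_face v w y" "card \<tau> = CARD('d)"
    unfolding max_cones_def by blast
  with assms(2) have "independent (vr v ` \<tau>)"
    unfolding regular_triangulation_heights_def by blast
  then obtain u where u: "u \<in> lattL v" "\<And>j. j \<notin> \<tau> \<Longrightarrow> 1 \<le> u j"
    using ex_lattL_ge_one_outside[OF assms(1) _ \<open>card \<tau> = CARD('d)\<close>] by blast
  define K where "K = \<bar>\<lceil>Max (range \<beta>)\<rceil>\<bar>"
  have "\<beta> j \<le> of_int (K * u j)" if "j \<notin> \<tau>" for j
  proof -
    have K_le: "K \<le> K * u j"
      using mult_left_mono[OF u(2)[OF that], of K] by (simp add: K_def)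
    have "\<beta> j \<le> Max (range \<beta>)"
      by (rule Max_ge) simp_all
    also have "\<dots> \<le> of_int K"
      unfolding K_def by (meson abs_ge_self le_of_int_ceiling of_int_le_iff order_trans)
    also have "\<dots> \<le> of_int (K * u j)"
      using K_le by (simp only: of_int_le_iff)
    finally show ?thesis .
  qed
  then show ?thesis
    using lattL_scale[OF u(1), of K] by (intro bexI[of _ "\<lambda>j. K * u j"]) auto
qed

lemma of_int_S_Sigma_in_C_Sigma:
  assumes "\<tau> \<in> max_cones v w" and "\<sigma> \<in> max_cones v w"
    and "l \<in> lattL v" and "b \<in> lattL v" and "z \<in> lattL v"
    and supp: "Supp (\<lambda>j. \<gamma> j - of_int (b j)) l \<subseteq> \<tau>"
    and z_bound: "\<And>j. j \<notin> \<tau> \<Longrightarrow> \<gamma> j \<le> of_int (z j)"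
    and b_bound: "\<And>j. j \<notin> \<sigma> \<Longrightarrow> z j \<le> b j"
  shows "(\<lambda>j. real_of_int (l j)) \<in> C_Sigma v w"
proof -
  have "(\<lambda>j. l j - b j + z j) \<in> lattL v"
    using assms(3-5) by (intro lattL_add lattL_diff)
  moreover have "0 \<le> l j - b j + z j" if "j \<notin> \<tau>" for j
  proof -
    have "j \<notin> Supp (\<lambda>j. \<gamma> j - of_int (b j)) l"
      using supp that by blast
    then have "0 \<le> of_int (l j) + (\<gamma> j - of_int (b j))"
      by (rule nonneg_if_not_in_Supp)
    with z_bound[OF that] have "(0::rat) \<le> of_int (l j - b j + z j)"
      by simp
    then show ?thesis by simp
  qed
  ultimately have "(\<lambda>j. real_of_int (l j - b j + z j)) \<in> C_sigma v \<tau>"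
    by (rule of_int_in_C_sigma)
  moreover have "(\<lambda>j. real_of_int (b j - z j)) \<in> C_sigma v \<sigma>"
    by (rule of_int_in_C_sigma[OF lattL_diff[OF assms(4,5)]]) (simp add: b_bound)
  ultimately have "(\<lambda>j. real_of_int (l j - b j + z j) + real_of_int (b j - z j)) \<in> C_Sigma v w"
    by (rule C_sigma_add_in_C_Sigma[OF assms(1,2)])
  then show ?thesis by simp
qed

lemma of_int_S_Sigma_subset_C_Sigma:
  assumes "\<sigma> \<in> max_cones v w" and "b \<in> lattL v"
    and "\<And>\<tau>. \<tau> \<in> max_cones v w \<Longrightarrow> z \<tau> \<in> lattL v"
    and "\<And>\<tau> j. \<tau> \<in> max_cones v w \<Longrightarrow> j \<notin> \<tau> \<Longrightarrow> \<gamma> j \<le> of_int (z \<tau> j)"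
    and "\<And>\<tau> j. \<tau> \<in> max_cones v w \<Longrightarrow> j \<notin> \<sigma> \<Longrightarrow> z \<tau> j \<le> b j"
  shows "(\<lambda>l j. real_of_int (l j)) ` S_Sigma v w (\<lambda>j. \<gamma> j - of_int (b j)) \<subseteq> C_Sigma v w"
proof clarify
  fix l
  assume "l \<in> S_Sigma v w (\<lambda>j. \<gamma> j - of_int (b j))"
  then obtain \<tau> where \<tau>: "\<tau> \<in> max_cones v w" and l: "l \<in> lattL v"
    and supp: "Supp (\<lambda>j. \<gamma> j - of_int (b j)) l \<subseteq> \<tau>"
    unfolding S_Sigma_def by blast
  show "(\<lambda>j. real_of_int (l j)) \<in> C_Sigma v w"
    by (rule of_int_S_Sigma_in_C_Sigma[OF \<tau> assms(1) l assms(2) assms(3)[OF \<tau>] supp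
          assms(4)[OF \<tau>] assms(5)[OF \<tau>]])
qed

theorem lemma2p6:
  fixes v :: "'n::finite \<Rightarrow> int^'d"
    and hv :: "int^'d"
    and w :: "'n \<Rightarrow> real"
    and \<gamma> :: "'n \<Rightarrow> rat"
  assumes inj: "inj v"
    and gen: "\<forall>x::int^'d. \<exists>c::'n \<Rightarrow> int. x = (\<Sum>j\<in>UNIV. c j *s v j)"
    and height: "\<forall>j. (\<Sum>i\<in>UNIV. hv $ i * v j $ i) = 1"
    and reg: "regular_triangulation_heights v w"
  shows "\<exists>b \<in> lattL v.
           (\<lambda>l j. real_of_int (l j)) ` S_Sigma v w (\<lambda>j. \<gamma> j - of_int (b j)) \<subseteq> C_Sigma v w"
proof (cases "max_cones v w = {}")
  case True
  then have "S_Sigma v w \<gamma>' = {}" for \<gamma>'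
    unfolding S_Sigma_def by simp
  moreover have "(\<lambda>j. 0) \<in> lattL v"
    unfolding lattL_def by simp
  ultimately show ?thesis by blast
next
  case False
  then obtain \<sigma> where \<sigma>: "\<sigma> \<in> max_cones v w" by blast
  have "\<forall>\<tau>\<in>max_cones v w. \<exists>z. z \<in> lattL v \<and> (\<forall>j. j \<notin> \<tau> \<longrightarrow> \<gamma> j \<le> of_int (z j))"
    using ex_lattL_ge_outside_max_cone[OF inj reg] by blast
  then obtain z where z: "\<And>\<tau>. \<tau> \<in> max_cones v w \<Longrightarrow> z \<tau> \<in> lattL v"
    "\<And>\<tau> j. \<tau> \<in> max_cones v w \<Longrightarrow> j \<notin> \<tau> \<Longrightarrow> \<gamma> j \<le> of_int (z \<tau> j)"
    by (metis bchoice)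
  define M where "M = Max (case_prod z ` (max_cones v w \<times> UNIV))"
  obtain b where b: "b \<in> lattL v" "\<And>j. j \<notin> \<sigma> \<Longrightarrow> real_of_int M \<le> of_int (b j)"
    using ex_lattL_ge_outside_max_cone[OF inj reg \<sigma>, of "\<lambda>_. real_of_int M"] by blast
  have b_dom: "z \<tau> j \<le> b j" if "\<tau> \<in> max_cones v w" "j \<notin> \<sigma>" for \<tau> j
  proof -
    have "z \<tau> j \<le> M" unfolding M_def using that(1) by (intro Max_ge) auto
    with b(2)[OF that(2)] show ?thesis by simp
  qed
  show ?thesis
    using of_int_S_Sigma_subset_C_Sigma[where z = z, OF \<sigma> b(1) z b_dom] b(1) by blast
qed

end
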